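(* In the search algorithm described in the context (with non-negative edge costs and a consistent heuristic), let $l$ be a label at the moment it is extracted from OPEN, and let $l'\in\alpha(v(l))$ be any label in the current frontier set at $v(l)$. Then $\vec g(l')\le\vec g(l)$ if and only if $p(\vec g(l'))\le p(\vec g(l))$.
   Context: $p:\mathbb{R}^M\to\mathbb{R}^{M-1}$ is the projection removing the first component of a vector. Graph $G=(V,E,\vec c)$ is directed, with $\vec c(e)\in(\mathbb{R}^+)^M$ for every edge. Start vertex $v_o$, destination $v_d$. A heuristic $\vec h:V\to(\mathbb{R}^+)^M$ is consistent if $\vec h(v)\le\vec h(u)+\vec c(u,v)$ componentwise for every edge $(u,v)$, and $\vec h(v_d)=\vec 0$. A label is a pair $l=(v(l),\vec g(l))$ with $v(l)\in V$, $\vec g(l)\in(\mathbb{R}^+)^M$; $\vec f(l)=\vec g(l)+\vec h(v(l))$. For $a,b$ vectors, $a\le b$ means componentwise $\le$; $a$ dominates $b$ iff $a\le b$ and $a\ne b$. OPEN is a priority queue of labels ordered by lexicographic order of $\vec f$. Each vertex $v$ has a frontier set $\alpha(v)$ of labels at $v$. Algorithm: initialize OPEN $=\{(v_o,\vec 0)\}$, $\alpha(v)=\emptyset$ for all $v$. While OPEN is nonempty: extract from OPEN a label $l$ with lexicographically minimal $\vec f(l)$. If FrontierCheck($l$) (there is $l'\in\alpha(v(l))$ with $\vec g(l')\le\vec g(l)$) or SolutionCheck($l$) (there is $l^*\in\alpha(v_d)$ with $\vec g(l^* )\le\vec f(l)$) holds, discard $l$ and continue. Otherwise UpdateFrontier($l$):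 remove from $\alpha(v(l))$ all labels whose $\vec g$ is dominated by $\vec g(l)$, then add $l$ to $\alpha(v(l))$. If $v(l)=v_d$, continue. Otherwise expand $l$: for each edge $(v(l),v')\in E$, form $l'=(v',\vec g(l)+\vec c(v(l),v'))$; if FrontierCheck($l'$) or SolutionCheck($l'$) holds discard $l'$, else insert $l'$ into OPEN. On termination return $\alpha(v_d)$. *)

theory Defs
  imports Main "HOL.Real"
begin

text \<open>Vectors of \<real>^M are represented as functions nat \<Rightarrow> real; only the
  components with index below M matter (component 1 of the paper is index 0).\<close>

type_synonym vec = "nat \<Rightarrow> real"
type_synonym 'v label = "'v \<times> vec"

definition vle :: "nat \<Rightarrow> vec \<Rightarrow> vec \<Rightarrow> bool" where
  "vle M a b \<longleftrightarrow> (\<forall>i<M. a i \<le> b i)"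

definition veq :: "nat \<Rightarrow> vec \<Rightarrow> vec \<Rightarrow> bool" where
  "veq M a b \<longleftrightarrow> (\<forall>i<M. a i = b i)"

definition dominates :: "nat \<Rightarrow> vec \<Rightarrow> vec \<Rightarrow> bool" where
  "dominates M a b \<longleftrightarrow> vle M a b \<and> \<not> veq M a b"

definition lex_le :: "nat \<Rightarrow> vec \<Rightarrow> vec \<Rightarrow> bool" where
  "lex_le M a b \<longleftrightarrow> veq M a b \<or> (\<exists>k<M. (\<forall>i<k. a i = b i) \<and> a k < b k)"

definition proj :: "vec \<Rightarrow> vec" where
  "proj a = (\<lambda>i. a (Suc i))"

definition vadd :: "vec \<Rightarrow> vec \<Rightarrow> vec" where
  "vadd a b = (\<lambda>i. a i + b i)"

definition consistent ::
  "nat \<Rightarrow> ('v \<times> 'v) set \<Rightarrow> ('v \<times> 'v \<Rightarrow> vec) \<Rightarrow> ('v \<Rightarrow> vec) \<Rightarrow> 'v \<Rightarrow> bool" where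
  "consistent M E c h vd \<longleftrightarrow>
     (\<forall>v. \<forall>i<M. 0 \<le> h v i) \<and>
     (\<forall>u v. (u, v) \<in> E \<longrightarrow> vle M (h u) (vadd (h v) (c (u, v)))) \<and>
     veq M (h vd) (\<lambda>_. 0)"

definition fval :: "('v \<Rightarrow> vec) \<Rightarrow> 'v label \<Rightarrow> vec" where
  "fval h l = vadd (snd l) (h (fst l))"

definition frontier_check :: "nat \<Rightarrow> ('v \<Rightarrow> 'v label set) \<Rightarrow> 'v label \<Rightarrow> bool" where
  "frontier_check M \<alpha> l \<longleftrightarrow> (\<exists>l'\<in>\<alpha> (fst l). vle M (snd l') (snd l))"

definition solution_check ::
  "nat \<Rightarrow> ('v \<Rightarrow> vec) \<Rightarrow> 'v \<Rightarrow> ('v \<Rightarrow> 'v label set) \<Rightarrow> 'v label \<Rightarrow> bool" where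
  "solution_check M h vd \<alpha> l \<longleftrightarrow> (\<exists>l'\<in>\<alpha> vd. vle M (snd l') (fval h l))"

definition update_frontier ::
  "nat \<Rightarrow> ('v \<Rightarrow> 'v label set) \<Rightarrow> 'v label \<Rightarrow> ('v \<Rightarrow> 'v label set)" where
  "update_frontier M \<alpha> l =
     \<alpha>(fst l := {l' \<in> \<alpha> (fst l). \<not> dominates M (snd l) (snd l')} \<union> {l})"

definition lex_min :: "nat \<Rightarrow> ('v \<Rightarrow> vec) \<Rightarrow> 'v label set \<Rightarrow> 'v label \<Rightarrow> bool" where
  "lex_min M h Q l \<longleftrightarrow> l \<in> Q \<and> (\<forall>l2\<in>Q. lex_le M (fval h l) (fval h l2))"

definition children ::
  "nat \<Rightarrow> ('v \<times> 'v) set \<Rightarrow> ('v \<times> 'v \<Rightarrow> vec) \<Rightarrow> ('v \<Rightarrow> vec) \<Rightarrow> 'v \<Rightarrow>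
   ('v \<Rightarrow> 'v label set) \<Rightarrow> 'v label \<Rightarrow> 'v label set" where
  "children M E c h vd \<alpha> l =
     {l'. \<exists>v'. (fst l, v') \<in> E \<and> l' = (v', vadd (snd l) (c (fst l, v'))) \<and>
            \<not> frontier_check M \<alpha> l' \<and> \<not> solution_check M h vd \<alpha> l'}"

inductive step ::
  "nat \<Rightarrow> ('v \<times> 'v) set \<Rightarrow> ('v \<times> 'v \<Rightarrow> vec) \<Rightarrow> ('v \<Rightarrow> vec) \<Rightarrow> 'v \<Rightarrow>
   'v label set \<times> ('v \<Rightarrow> 'v label set) \<Rightarrow> 'v label set \<times> ('v \<Rightarrow> 'v label set) \<Rightarrow> bool"
  for M E c h vd where
  discard: "\<lbrakk> lex_min M h Q l; frontier_check M \<alpha> l \<or> solution_check M h vd \<alpha> l \<rbrakk>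
      \<Longrightarrow> step M E c h vd (Q, \<alpha>) (Q - {l}, \<alpha>)"
| at_goal: "\<lbrakk> lex_min M h Q l; \<not> frontier_check M \<alpha> l; \<not> solution_check M h vd \<alpha> l;
      fst l = vd \<rbrakk>
      \<Longrightarrow> step M E c h vd (Q, \<alpha>) (Q - {l}, update_frontier M \<alpha> l)"
| expand: "\<lbrakk> lex_min M h Q l; \<not> frontier_check M \<alpha> l; \<not> solution_check M h vd \<alpha> l;
      fst l \<noteq> vd \<rbrakk>
      \<Longrightarrow> step M E c h vd (Q, \<alpha>)
            ((Q - {l}) \<union> children M E c h vd (update_frontier M \<alpha> l) l,
             update_frontier M \<alpha> l)"

definition reachable ::
  "nat \<Rightarrow> ('v \<times> 'v) set \<Rightarrow> ('v \<times> 'v \<Rightarrow> vec) \<Rightarrow> ('v \<Rightarrow> vec) \<Rightarrow> 'v \<Rightarrow> 'v \<Rightarrow>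
   'v label set \<times> ('v \<Rightarrow> 'v label set) \<Rightarrow> bool" where
  "reachable M E c h vo vd s \<longleftrightarrow>
     (step M E c h vd)\<^sup>*\<^sup>* ({(vo, \<lambda>_. 0)}, \<lambda>_. {}) s"

end

theory Submission
  imports Defs
begin

text \<open>Labels leave OPEN in lexicographic order of f, and a consistent heuristic makes f
  non-decreasing along edges; hence the first component of f never decreases over the
  run. So every label in a frontier set has first f-component at most that of the label
  extracted next, and at the same vertex this is a bound on the first g-component. The
  first component of the comparison is therefore automatic, and g-dominance is decided
  by the remaining components alone.\<close>

lemma vle_iff_first_and_proj:
  assumes "0 < M"
  shows "vle M a b \<longleftrightarrow> a 0 \<le> b 0 \<and> vle (M - 1) (proj a) (proj b)"
proof -
  obtain N where "M = Suc N" using assms gr0_conv_Suc by blast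
  then show ?thesis unfolding vle_def proj_def by (simp add: All_less_Suc2)
qed

lemma lex_le_first_component:
  assumes "0 < M" "lex_le M a b"
  shows "a 0 \<le> b 0"
  using assms unfolding lex_le_def veq_def
  by (metis less_eq_real_def neq0_conv)

lemma lex_min_first_component:
  assumes "0 < M" "lex_min M h Q l" "q \<in> Q"
  shows "fval h l 0 \<le> fval h q 0"
  using assms lex_le_first_component unfolding lex_min_def by blast

lemma fval_le_children:
  assumes "consistent M E c h vd" "x \<in> children M E c h vd \<alpha> l" "i < M"
  shows "fval h l i \<le> fval h x i"
proof -
  from assms(2) obtain v' where e: "(fst l, v') \<in> E"
    and x: "x = (v', vadd (snd l) (c (fst l, v')))"
    unfolding children_def by blast
  from assms(1) e have "vle M (h (fst l)) (vadd (h v') (c (fst l, v')))"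
    unfolding consistent_def by blast
  with assms(3) have "h (fst l) i \<le> h v' i + c (fst l, v') i"
    unfolding vle_def vadd_def by auto
  then show ?thesis unfolding x fval_def vadd_def by simp
qed

lemma mem_update_frontier:
  assumes "x \<in> update_frontier M \<alpha> l v"
  shows "x \<in> \<alpha> v \<or> (x = l \<and> v = fst l)"
  using assms unfolding update_frontier_def by (auto split: if_splits)

definition frontier_below_open :: "('v \<Rightarrow> vec) \<Rightarrow> 'v label set \<times> ('v \<Rightarrow> 'v label set) \<Rightarrow> bool"
  where "frontier_below_open h s \<longleftrightarrow>
    (\<forall>v. \<forall>x\<in>snd s v. fst x = v \<and> (\<forall>q\<in>fst s. fval h x 0 \<le> fval h q 0))"

lemma frontier_below_open_update:
  assumes inv: "frontier_below_open h (Q, \<alpha>)"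
    and l: "l \<in> Q"
    and bound: "\<forall>q\<in>Q'. fval h l 0 \<le> fval h q 0"
  shows "frontier_below_open h (Q', update_frontier M \<alpha> l)"
  unfolding frontier_below_open_def
proof (intro allI ballI)
  fix v x assume "x \<in> snd (Q', update_frontier M \<alpha> l) v"
  then consider "x \<in> \<alpha> v" | "x = l" "v = fst l"
    using mem_update_frontier[of x M \<alpha> l v] by auto
  then show "fst x = v \<and> (\<forall>q\<in>fst (Q', update_frontier M \<alpha> l). fval h x 0 \<le> fval h q 0)"
  proof cases
    case 1
    then have "fst x = v" "fval h x 0 \<le> fval h l 0"
      using inv l unfolding frontier_below_open_def by auto
    with bound show ?thesis by (simp add: order_trans)
  next
    case 2
    with bound show ?thesis by simp
  qed
qed

lemma step_preserves_frontier_below_open: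
  assumes "0 < M" "consistent M E c h vd" "step M E c h vd s t" "frontier_below_open h s"
  shows "frontier_below_open h t"
  using assms(3,4)
proof (cases rule: step.cases)
  case (discard Q l \<alpha>)
  then show ?thesis using assms(4) unfolding frontier_below_open_def by auto
next
  case (at_goal Q l \<alpha>)
  have "l \<in> Q" using at_goal(3) unfolding lex_min_def by blast
  moreover have "\<forall>q\<in>Q - {l}. fval h l 0 \<le> fval h q 0"
    using lex_min_first_component[OF assms(1) at_goal(3)] by blast
  ultimately show ?thesis
    using frontier_below_open_update assms(4) unfolding at_goal(1,2) by blast
next
  case (expand Q l \<alpha>)
  have "l \<in> Q" using expand(3) unfolding lex_min_def by blast
  moreover have "\<forall>q\<in>Q - {l} \<union> children M E c h vd (update_frontier M \<alpha> l) l.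
      fval h l 0 \<le> fval h q 0"
    using lex_min_first_component[OF assms(1) expand(3)]
      fval_le_children[OF assms(2) _ assms(1)] by blast
  ultimately show ?thesis
    using frontier_below_open_update assms(4) unfolding expand(1,2) by blast
qed

lemma reachable_frontier_below_open:
  assumes "0 < M" "consistent M E c h vd" "reachable M E c h vo vd s"
  shows "frontier_below_open h s"
proof -
  have "frontier_below_open h ({(vo, \<lambda>_. 0)}, \<lambda>_. {})"
    unfolding frontier_below_open_def by simp
  with assms(3) show ?thesis unfolding reachable_def
    by (induction rule: rtranclp_induct)
      (auto intro: step_preserves_frontier_below_open[OF assms(1,2)])
qed

theorem corollary2:
  fixes M :: nat and E :: "('v \<times> 'v) set" and c :: "'v \<times> 'v \<Rightarrow> vec"
    and h :: "'v \<Rightarrow> vec" and vo vd :: 'v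
    and OPEN :: "'v label set" and \<alpha> :: "'v \<Rightarrow> 'v label set" and l l' :: "'v label"
  assumes cost_nonneg: "\<forall>e\<in>E. \<forall>i<M. 0 \<le> c e i"
    and cons: "consistent M E c h vd"
    and reach: "reachable M E c h vo vd (OPEN, \<alpha>)"
    and extracted: "lex_min M h OPEN l"
    and in_frontier: "l' \<in> \<alpha> (fst l)"
  shows "vle M (snd l') (snd l) \<longleftrightarrow> vle (M - 1) (proj (snd l')) (proj (snd l))"
proof (cases "M = 0")
  case True
  then show ?thesis unfolding vle_def by simp
next
  case False
  then have M: "0 < M" by simp
  have "l \<in> OPEN" using extracted unfolding lex_min_def by blast
  with reachable_frontier_below_open[OF M cons reach] in_frontier
  have "fst l' = fst l" "fval h l' 0 \<le> fval h l 0"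
    unfolding frontier_below_open_def by auto
  then have "snd l' 0 \<le> snd l 0" unfolding fval_def vadd_def by simp
  then show ?thesis using vle_iff_first_and_proj[OF M] by blast
qed

end
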